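(* Suppose the description of $K$ contains a ball constraint $g_m(x)=R^2-\sum_{i=1}^n x_i^2$ for some real $R$. Then for every integer $d\ge d_{\min}$, $-\infty<\operatorname{val}P_d=\operatorname{val}D_d$ (with values in $\mathbb R\cup\{+\infty\}$).
   Context: Polynomial optimization problem: minimize $f(x)=\sum_\alpha f_\alpha x^\alpha$ over $x\in\mathbb R^n$ subject to $g_i(x)=\sum_\alpha g_{i,\alpha}x^\alpha\ge 0$, $i=1,\dots,m$, with real polynomials $f,g_i$; $K=\{x:g_i(x)\ge0,\ i=1,\dots,m\}$. Set $g_0:=1$, $d_i:=\lceil\deg(g_i)/2\rceil$, $d_{\min}:=\max_{i=0,\dots,m}d_i$ (assume $\deg f\le 2d$). For $y=(y_\alpha)_{|\alpha|\le 2d}$, the localizing matrix $M_{d-d_i}(g_iy):=\big(\sum_\gamma g_{i,\gamma}y_{\alpha+\beta+\gamma}\big)_{|\alpha|,|\beta|\le d-d_i}$ is written $\sum_{|\alpha|\le 2d}A_{i,\alpha}y_\alpha$ with real symmetric matrices $A_{i,\alpha}$. $P_d$: $\inf_y\sum_\alpha f_\alpha y_\alpha$ s.t. $y_0=1$, $M_{d-d_i}(g_iy)\succeq0$, $i=0,\dots,m$. $D_d$: $\sup_{z\in\mathbb R,Z_0,\dots,Z_m} z$ s.t. $f_0-z=\sum_{i=0}^m\langle A_{i,0},Z_i\rangle$, $f_\alpha=\sum_{i=0}^m\langle A_{i,\alpha},Z_i\rangle$ for $0<|\alpha|\le 2d$, $Z_i\succeq0$, where $\langle A,B\rangle=\operatorname{trace}(AB)$.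 $\operatorname{val}$ denotes the optimal value, with $\inf\emptyset=+\infty$, $\sup\emptyset=-\infty$. *)

theory Defs
  imports Complex_Main "HOL-Library.Extended_Real"
begin

text \<open>Multivariate real polynomials in the variables x_0,...,x_(n-1) are represented by
  their coefficient functions p :: (nat => nat) => real on multi-indices alpha :: nat => nat
  (alpha i = exponent of x_i), with finite support on multi-indices supported in {0..<n}.\<close>

type_synonym mindex = "nat \<Rightarrow> nat"
type_synonym rpoly = "mindex \<Rightarrow> real"

definition zero_idx :: mindex where "zero_idx = (\<lambda>_. 0)"

definition add_idx :: "mindex \<Rightarrow> mindex \<Rightarrow> mindex" where
  "add_idx a b = (\<lambda>j. a j + b j)"

definition mdeg :: "nat \<Rightarrow> mindex \<Rightarrow> nat" where
  "mdeg n a = (\<Sum>i<n. a i)"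

definition mons_upto :: "nat \<Rightarrow> nat \<Rightarrow> mindex set" where
  "mons_upto n k = {a. (\<forall>i\<ge>n. a i = 0) \<and> mdeg n a \<le> k}"

definition is_poly :: "nat \<Rightarrow> rpoly \<Rightarrow> bool" where
  "is_poly n p \<longleftrightarrow> finite {a. p a \<noteq> 0} \<and> (\<forall>a. p a \<noteq> 0 \<longrightarrow> (\<forall>i\<ge>n. a i = 0))"

definition pdeg :: "nat \<Rightarrow> rpoly \<Rightarrow> nat" where
  "pdeg n p = Max (insert 0 {mdeg n a | a. p a \<noteq> 0})"

definition one_poly :: rpoly where
  "one_poly = (\<lambda>a. if a = zero_idx then 1 else 0)"

text \<open>the ball polynomial R^2 - sum_i x_i^2\<close>
definition ball_poly :: "nat \<Rightarrow> real \<Rightarrow> rpoly" where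
  "ball_poly n R = (\<lambda>a. if a = zero_idx then R\<^sup>2
      else if (\<exists>i<n. a = (\<lambda>j. if j = i then 2 else 0)) then -1 else 0)"

definition gg :: "(nat \<Rightarrow> rpoly) \<Rightarrow> nat \<Rightarrow> rpoly" where
  "gg g i = (if i = 0 then one_poly else g i)"

definition dloc :: "nat \<Rightarrow> (nat \<Rightarrow> rpoly) \<Rightarrow> nat \<Rightarrow> nat" where
  "dloc n g i = (pdeg n (gg g i) + 1) div 2"

definition dmin :: "nat \<Rightarrow> (nat \<Rightarrow> rpoly) \<Rightarrow> nat \<Rightarrow> nat" where
  "dmin n g m = Max {dloc n g i | i. i \<le> m}"

definition psd :: "'a set \<Rightarrow> ('a \<Rightarrow> 'a \<Rightarrow> real) \<Rightarrow> bool" where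
  "psd I M \<longleftrightarrow> (\<forall>a\<in>I. \<forall>b\<in>I. M a b = M b a) \<and>
     (\<forall>v. 0 \<le> (\<Sum>a\<in>I. \<Sum>b\<in>I. v a * M a b * v b))"

definition locmat :: "rpoly \<Rightarrow> (mindex \<Rightarrow> real) \<Rightarrow> mindex \<Rightarrow> mindex \<Rightarrow> real" where
  "locmat p y = (\<lambda>a b. \<Sum>c\<in>{c. p c \<noteq> 0}. p c * y (add_idx (add_idx a b) c))"

text \<open>coefficient matrix A_alpha of y_alpha in the localizing matrix of p\<close>
definition Amat :: "rpoly \<Rightarrow> mindex \<Rightarrow> mindex \<Rightarrow> mindex \<Rightarrow> real" where
  "Amat p al = (\<lambda>a b. \<Sum>c\<in>{c. p c \<noteq> 0 \<and> add_idx (add_idx a b) c = al}. p c)"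

definition tr_inner :: "'a set \<Rightarrow> ('a \<Rightarrow> 'a \<Rightarrow> real) \<Rightarrow> ('a \<Rightarrow> 'a \<Rightarrow> real) \<Rightarrow> real" where
  "tr_inner I A Z = (\<Sum>a\<in>I. \<Sum>b\<in>I. A a b * Z b a)"

definition P_feas :: "nat \<Rightarrow> (nat \<Rightarrow> rpoly) \<Rightarrow> nat \<Rightarrow> nat \<Rightarrow> (mindex \<Rightarrow> real) \<Rightarrow> bool" where
  "P_feas n g m d y \<longleftrightarrow> y zero_idx = 1 \<and>
     (\<forall>i\<le>m. psd (mons_upto n (d - dloc n g i)) (locmat (gg g i) y))"

definition valP :: "nat \<Rightarrow> rpoly \<Rightarrow> (nat \<Rightarrow> rpoly) \<Rightarrow> nat \<Rightarrow> nat \<Rightarrow> ereal" where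
  "valP n f g m d = Inf {ereal (\<Sum>a\<in>{a. f a \<noteq> 0}. f a * y a) | y. P_feas n g m d y}"

definition D_feas :: "nat \<Rightarrow> rpoly \<Rightarrow> (nat \<Rightarrow> rpoly) \<Rightarrow> nat \<Rightarrow> nat \<Rightarrow> real
     \<Rightarrow> (nat \<Rightarrow> mindex \<Rightarrow> mindex \<Rightarrow> real) \<Rightarrow> bool" where
  "D_feas n f g m d z Z \<longleftrightarrow>
     (\<forall>i\<le>m. psd (mons_upto n (d - dloc n g i)) (Z i)) \<and>
     (\<forall>al\<in>mons_upto n (2 * d).
        f al - (if al = zero_idx then z else 0) =
        (\<Sum>i\<le>m. tr_inner (mons_upto n (d - dloc n g i)) (Amat (gg g i) al) (Z i)))"

definition valD :: "nat \<Rightarrow> rpoly \<Rightarrow> (nat \<Rightarrow> rpoly) \<Rightarrow> nat \<Rightarrow> nat \<Rightarrow> ereal" where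
  "valD n f g m d = Sup {ereal z | z. \<exists>Z. D_feas n f g m d z Z}"

end

theory Submission
  imports Defs
begin

text \<open>Weak duality is the trace pairing of the localizing matrices of a moment vector with the
  Gram matrices of a dual certificate. For strong duality, the ball constraint makes the truncated
  quadratic module Q Archimedean: telescoping R^2 x^(2c) - x^(2c) x_i^2 \<in> Q gives
  R^(2|c|) - x^(2c) \<in> Q, hence t \<plusminus> x^\<alpha> \<in> Q for every monomial of degree at most 2d, i.e. the
  constant 1 is an order unit of Q. Consequently f + T \<in> Q for some T, so D_d is feasible; and
  whenever f - z \<notin> Q, a separation argument that needs only this order unit (not closedness of Q)
  produces a moment vector y with y_0 = 1 that is nonnegative on Q, hence feasible for P_d, and has
  objective value at most z.\<close>

section \<open>Separation in finite dimensions\<close>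

text \<open>For multi-indices, unit_vec \<alpha> is the coefficient vector of the monomial x^\<alpha>.\<close>

definition unit_vec :: "'a \<Rightarrow> 'a \<Rightarrow> real" where
  "unit_vec a = (\<lambda>x. if x = a then 1 else 0)"

lemma sum_unit_vec: "finite A \<Longrightarrow> a \<in> A \<Longrightarrow> (\<Sum>x\<in>A. unit_vec a x * h x) = h a"
proof -
  assume "finite A" "a \<in> A"
  moreover have "(\<Sum>x\<in>A. unit_vec a x * h x) = (\<Sum>x\<in>A. if x = a then h x else 0)"
    by (intro sum.cong) (auto simp: unit_vec_def)
  ultimately show ?thesis by simp
qed

lemma cone_extension_one_coordinate:
  fixes C :: "('a \<Rightarrow> real) set" and S :: "('a \<Rightarrow> real) \<Rightarrow> real"
  assumes comb: "\<And>h h' r s. h \<in> C \<Longrightarrow> h' \<in> C \<Longrightarrow> 0 \<le> r \<Longrightarrow> 0 \<le> s \<Longrightarrow> (\<lambda>a. r * h a + s * h' a) \<in> C"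
    and linear: "\<And>h h' r s. S (\<lambda>a. r * h a + s * h' a) = r * S h + s * S h'"
    and kernel: "\<And>h. h \<in> C \<Longrightarrow> h b = 0 \<Longrightarrow> 0 \<le> S h"
    and pos: "hp \<in> C" "0 < hp b" and neg: "hn \<in> C" "hn b < 0"
  shows "\<exists>t. \<forall>h\<in>C. 0 \<le> S h + t * h b"
proof -
  define A where "A = {- S h / h b | h. h \<in> C \<and> 0 < h b}"
  have A_le: "x \<le> S h' / - h' b" if "x \<in> A" "h' \<in> C" "h' b < 0" for x h'
  proof -
    from that obtain h where h: "h \<in> C" "0 < h b" "x = - S h / h b" unfolding A_def by blast
    have "0 \<le> S (\<lambda>a. (- h' b) * h a + h b * h' a)"
      using h that by (intro kernel comb) auto
    hence "h' b * S h \<le> h b * S h'" by (simp only: linear)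
    hence "h' b * S h \<le> S h' * h b" by (simp only: mult.commute[of "h b"])
    hence "h' b * S h / h b \<le> S h'" using h(2) by (simp add: pos_divide_le_eq)
    moreover have "x * (- h' b) = h' b * S h / h b" using h(3) by simp
    ultimately show ?thesis using that(3) by (subst pos_le_divide_eq) auto
  qed
  have A_ne: "A \<noteq> {}" using pos unfolding A_def by blast
  have A_bdd: "bdd_above A" using A_le neg by (auto simp: bdd_above_def)
  show ?thesis
  proof (intro exI ballI)
    fix h assume h: "h \<in> C"
    consider "h b < 0" | "h b = 0" | "0 < h b" by linarith
    then show "0 \<le> S h + Sup A * h b"
    proof cases
      case 1
      have "Sup A \<le> S h / - h b" using A_ne A_le h 1 by (intro cSup_least) auto
      thus ?thesis using 1 by (simp add: field_simps)
    next
      case 2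
      thus ?thesis using kernel h by simp
    next
      case 3
      have "- S h / h b \<le> Sup A" using A_bdd h 3 unfolding A_def by (intro cSup_upper) auto
      thus ?thesis using 3 by (simp add: field_simps)
    qed
  qed
qed

lemma cone_extension_step:
  fixes C :: "('a \<Rightarrow> real) set"
  assumes comb: "\<And>h h' r s. h \<in> C \<Longrightarrow> h' \<in> C \<Longrightarrow> 0 \<le> r \<Longrightarrow> 0 \<le> s \<Longrightarrow> (\<lambda>a. r * h a + s * h' a) \<in> C"
    and units: "\<And>s. s = 1 \<or> s = -1 \<Longrightarrow> \<exists>t. \<exists>h\<in>C. \<forall>a\<in>I. h a = t * unit_vec a0 a + s * unit_vec b a"
    and "finite K" "a0 \<in> K" "b \<in> I" "b \<notin> K"
    and y_nonneg: "\<And>h. h \<in> C \<Longrightarrow> \<forall>a\<in>I - K. h a = 0 \<Longrightarrow> 0 \<le> (\<Sum>a\<in>K. y a * h a)"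
  shows "\<exists>t. \<forall>h\<in>C. (\<forall>a\<in>I - insert b K. h a = 0) \<longrightarrow> 0 \<le> (\<Sum>a\<in>insert b K. (y(b := t)) a * h a)"
proof -
  define C' where "C' = {h \<in> C. \<forall>a\<in>I - insert b K. h a = 0}"
  have unit_in_C': "\<exists>h\<in>C'. h b = s" if s: "s = 1 \<or> s = -1" for s :: real
  proof -
    obtain t h where "h \<in> C" "\<forall>a\<in>I. h a = t * unit_vec a0 a + s * unit_vec b a"
      using units[OF s] by blast
    thus ?thesis using assms(4-6) unfolding C'_def by (intro bexI[of _ h]) (auto simp: unit_vec_def)
  qed
  obtain hp hn where "hp \<in> C'" "hp b = 1" "hn \<in> C'" "hn b = -1"
    using unit_in_C' by blast
  moreover have "(\<lambda>a. r * h a + s * h' a) \<in> C'"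
    if "h \<in> C'" "h' \<in> C'" "0 \<le> r" "0 \<le> s" for h h' r s
    using that comb unfolding C'_def by auto
  moreover have "0 \<le> (\<Sum>a\<in>K. y a * h a)" if "h \<in> C'" "h b = 0" for h
    using that y_nonneg unfolding C'_def by auto
  ultimately have "\<exists>t. \<forall>h\<in>C'. 0 \<le> (\<Sum>a\<in>K. y a * h a) + t * h b"
    by (intro cone_extension_one_coordinate[of C' _ b hp hn])
       (simp_all add: distrib_left sum.distrib sum_distrib_left mult.left_commute)
  then obtain t where t: "\<forall>h\<in>C'. 0 \<le> (\<Sum>a\<in>K. y a * h a) + t * h b" ..
  have "(\<Sum>a\<in>K. (y(b := t)) a * h a) = (\<Sum>a\<in>K. y a * h a)" for h
    using assms(6) by (intro sum.cong) auto
  hence "(\<Sum>a\<in>insert b K. (y(b := t)) a * h a) = t * h b + (\<Sum>a\<in>K. y a * h a)" for h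
    using assms(3,6) by simp
  with t show ?thesis unfolding C'_def by (intro exI[of _ t]) (simp add: add.commute)
qed

text \<open>No closedness of C is needed: the unit vector at a0 is an order unit, and y is built one
  coordinate at a time by the one-dimensional extension above (M. Riesz).\<close>

lemma cone_separation:
  fixes C :: "('a \<Rightarrow> real) set" and I :: "'a set"
  assumes fin: "finite I" and a0_I: "a0 \<in> I"
    and comb: "\<And>h h' r s. h \<in> C \<Longrightarrow> h' \<in> C \<Longrightarrow> 0 \<le> r \<Longrightarrow> 0 \<le> s \<Longrightarrow> (\<lambda>a. r * h a + s * h' a) \<in> C"
    and archimedean: "\<And>b s. b \<in> I \<Longrightarrow> s = 1 \<or> s = -1 \<Longrightarrow>
      \<exists>t. \<exists>h\<in>C. \<forall>a\<in>I. h a = t * unit_vec a0 a + s * unit_vec b a"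
    and proper: "\<And>h. h \<in> C \<Longrightarrow> \<not> (\<forall>a\<in>I. h a = - unit_vec a0 a)"
  shows "\<exists>y. y a0 = 1 \<and> (\<forall>h\<in>C. 0 \<le> (\<Sum>a\<in>I. y a * h a))"
proof -
  have "\<exists>y. y a0 = 1 \<and> (\<forall>h\<in>C. (\<forall>a\<in>I - insert a0 J. h a = 0) \<longrightarrow> 0 \<le> (\<Sum>a\<in>insert a0 J. y a * h a))"
    if "finite J" "J \<subseteq> I - {a0}" for J
    using that
  proof (induction J rule: finite_subset_induct')
    case empty
    have "0 \<le> h a0" if "h \<in> C" "\<forall>a\<in>I - {a0}. h a = 0" for h
    proof (rule ccontr)
      assume "\<not> 0 \<le> h a0"
      hence "(\<lambda>a. (- 1 / h a0) * h a + 0 * h a) \<in> C" by (intro comb \<open>h \<in> C\<close>) auto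
      moreover have "\<forall>a\<in>I. (- 1 / h a0) * h a + 0 * h a = - unit_vec a0 a"
        using that \<open>\<not> 0 \<le> h a0\<close> by (auto simp: unit_vec_def)
      ultimately show False using proper by blast
    qed
    thus ?case by (intro exI[of _ "\<lambda>_. 1"]) simp
  next
    case (insert b J)
    from insert.IH obtain y where "y a0 = 1"
      and "\<And>h. h \<in> C \<Longrightarrow> \<forall>a\<in>I - insert a0 J. h a = 0 \<Longrightarrow> 0 \<le> (\<Sum>a\<in>insert a0 J. y a * h a)"
      by blast
    moreover from this(2) insert obtain t where "\<forall>h\<in>C. (\<forall>a\<in>I - insert b (insert a0 J). h a = 0) \<longrightarrow>
        0 \<le> (\<Sum>a\<in>insert b (insert a0 J). (y(b := t)) a * h a)"
      using cone_extension_step[OF comb archimedean, of b "insert a0 J" y] by blast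
    ultimately show ?case using insert by (intro exI[of _ "y(b := t)"]) (auto simp: insert_commute)
  qed
  from this[of "I - {a0}"] show ?thesis using fin a0_I by (simp add: insert_absorb)
qed

section \<open>Positive semidefinite matrices\<close>

definition quad_form :: "'a set \<Rightarrow> ('a \<Rightarrow> 'a \<Rightarrow> real) \<Rightarrow> ('a \<Rightarrow> real) \<Rightarrow> real" where
  "quad_form J M v = (\<Sum>a\<in>J. \<Sum>b\<in>J. v a * M a b * v b)"

lemma psd_iff_quad_form:
  "psd J M \<longleftrightarrow> (\<forall>a\<in>J. \<forall>b\<in>J. M a b = M b a) \<and> (\<forall>v. 0 \<le> quad_form J M v)"
  unfolding psd_def quad_form_def ..

lemma quad_form_restrict:
  assumes "finite S" "T \<subseteq> S" "\<forall>a\<in>S - T. v a = 0"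
  shows "quad_form S M v = quad_form T M v"
proof -
  have "quad_form S M v = (\<Sum>a\<in>T. \<Sum>b\<in>S. v a * M a b * v b)"
    unfolding quad_form_def using assms by (intro sum.mono_neutral_right) auto
  also have "\<dots> = quad_form T M v"
    unfolding quad_form_def using assms by (intro sum.cong refl sum.mono_neutral_right) auto
  finally show ?thesis .
qed

lemma quad_form_cong: "\<forall>a\<in>J. v a = v' a \<Longrightarrow> quad_form J M v = quad_form J M v'"
  unfolding quad_form_def by (intro sum.cong refl) auto

lemma quad_form_unit_vec: "finite J \<Longrightarrow> a \<in> J \<Longrightarrow> quad_form J M (unit_vec a) = M a a"
  by (subst quad_form_restrict[of J "{a}"]) (auto simp: quad_form_def unit_vec_def)

lemma quad_form_two_unit_vecs:
  assumes "finite J" "a \<in> J" "b \<in> J"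
  shows "quad_form J M (\<lambda>x. unit_vec a x + s * unit_vec b x) = M a a + s * M a b + s * M b a + s * s * M b b"
proof (cases "a = b")
  case True
  thus ?thesis using assms
    by (subst quad_form_restrict[of J "{a}"]) (auto simp: quad_form_def unit_vec_def algebra_simps)
next
  case False
  thus ?thesis using assms
    by (subst quad_form_restrict[of J "{a, b}"]) (auto simp: quad_form_def unit_vec_def algebra_simps)
qed

lemma psd_zero: "psd J (\<lambda>a b. 0)"
  unfolding psd_def by simp

lemma psd_outer: "psd J (\<lambda>a b. v a * v b)"
  unfolding psd_iff_quad_form quad_form_def
proof (intro conjI ballI allI)
  fix w
  have "(\<Sum>a\<in>J. \<Sum>b\<in>J. w a * (v a * v b) * w b) = (\<Sum>a\<in>J. w a * v a) * (\<Sum>b\<in>J. w b * v b)"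
    by (simp add: sum_product algebra_simps)
  thus "0 \<le> (\<Sum>a\<in>J. \<Sum>b\<in>J. w a * (v a * v b) * w b)" by simp
qed simp

lemma psd_comb:
  assumes "psd J M" "psd J M'" "0 \<le> r" "0 \<le> s"
  shows "psd J (\<lambda>a b. r * M a b + s * M' a b)"
proof -
  have "quad_form J (\<lambda>a b. r * M a b + s * M' a b) v = r * quad_form J M v + s * quad_form J M' v" for v
    unfolding quad_form_def by (simp add: algebra_simps sum.distrib sum_distrib_left)
  thus ?thesis using assms unfolding psd_iff_quad_form by simp
qed

lemma tr_inner_comb:
  "tr_inner J A (\<lambda>a b. r * X a b + s * Y a b) = r * tr_inner J A X + s * tr_inner J A Y"
  unfolding tr_inner_def by (simp add: algebra_simps sum.distrib sum_distrib_left)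

lemma psd_subset:
  assumes "finite S" "T \<subseteq> S" "psd S M"
  shows "psd T M"
  unfolding psd_iff_quad_form
proof (intro conjI ballI allI)
  fix a b assume "a \<in> T" "b \<in> T"
  thus "M a b = M b a" using assms unfolding psd_def by blast
next
  fix v
  have "quad_form T M v = quad_form S M (\<lambda>a. if a \<in> T then v a else 0)"
    using assms by (subst quad_form_restrict[of S T]) (auto intro: quad_form_cong)
  thus "0 \<le> quad_form T M v" using assms(3) unfolding psd_iff_quad_form by simp
qed

lemma psd_diag_nonneg: "finite S \<Longrightarrow> psd S M \<Longrightarrow> j \<in> S \<Longrightarrow> 0 \<le> M j j"
  using quad_form_unit_vec[of S j M] unfolding psd_iff_quad_form by metis

lemma psd_zero_diag_row:
  assumes "finite S" "psd S M" "j \<in> S" "M j j = 0" "b \<in> S"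
  shows "M j b = 0"
proof (rule ccontr)
  assume ne: "M j b \<noteq> 0"
  define t where "t = - (M b b + 1) / (2 * M j b)"
  have "M b j = M j b" using assms(2,3,5) unfolding psd_def by blast
  hence "quad_form S M (\<lambda>x. unit_vec b x + t * unit_vec j x) = M b b + 2 * t * M j b"
    using assms by (simp add: quad_form_two_unit_vecs)
  also have "\<dots> = -1" using ne unfolding t_def by (simp add: field_simps)
  finally show False using assms(2) unfolding psd_iff_quad_form by (metis neg_0_le_iff_le not_one_le_zero)
qed

lemma psd_schur_complement:
  assumes "finite J" "j \<notin> J" "psd (insert j J) M" "0 < M j j"
  shows "psd J (\<lambda>a b. M a b - M j a * M j b / M j j)"
  unfolding psd_iff_quad_form
proof (intro conjI ballI allI)
  have sym: "\<And>a b. a \<in> insert j J \<Longrightarrow> b \<in> insert j J \<Longrightarrow> M a b = M b a"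
    using assms(3) unfolding psd_def by blast
  then show "M a b - M j a * M j b / M j j = M b a - M j b * M j a / M j j" if "a \<in> J" "b \<in> J" for a b
    using that by simp
  fix v
  define s where "s = (\<Sum>b\<in>J. M j b * v b)"
  define t where "t = - s / M j j"
  have "quad_form J (\<lambda>a b. M a b - M j a * M j b / M j j) v
     = quad_form J M v - (\<Sum>a\<in>J. \<Sum>b\<in>J. (M j a * v a) * (M j b * v b) / M j j)"
    unfolding quad_form_def by (simp add: sum_subtractf right_diff_distrib left_diff_distrib mult_ac)
  also have "\<dots> = quad_form J M v - s * s / M j j"
    unfolding s_def by (simp add: sum_product sum_divide_distrib)
  also have "\<dots> = t * M j j * t + 2 * t * s + quad_form J M v"
    using assms(4) unfolding t_def by (simp add: field_simps)
  also have "\<dots> = t * M j j * t + (\<Sum>b\<in>J. t * M j b * v b) + (\<Sum>a\<in>J. v a * M a j * t) + quad_form J M v"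
  proof -
    have "(\<Sum>b\<in>J. t * M j b * v b) = t * s" by (simp add: s_def sum_distrib_left mult.assoc)
    moreover have "(\<Sum>a\<in>J. v a * M a j * t) = t * s"
      unfolding s_def sum_distrib_left using sym by (intro sum.cong) auto
    ultimately show ?thesis by simp
  qed
  also have "\<dots> = quad_form (insert j J) M (v(j := t))"
  proof -
    have "\<And>a. a \<in> J \<Longrightarrow> (v(j := t)) a = v a" using assms(2) by auto
    thus ?thesis using assms(1,2) unfolding quad_form_def
      by (simp add: sum.distrib fun_upd_same del: fun_upd_apply cong: sum.cong)
  qed
  finally show "0 \<le> quad_form J (\<lambda>a b. M a b - M j a * M j b / M j j) v"
    using assms(3) unfolding psd_iff_quad_form by simp
qed

lemma psd_sum_of_rank_one:
  assumes "finite J" "psd J M"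
  shows "\<exists>(k::nat) V. \<forall>a\<in>J. \<forall>b\<in>J. M a b = (\<Sum>i<k. V i a * V i b)"
  using assms
proof (induction J arbitrary: M rule: finite_induct)
  case empty
  show ?case by simp
next
  case (insert j J)
  have fin: "finite (insert j J)" using insert.hyps by simp
  have row_sym: "\<And>b. b \<in> insert j J \<Longrightarrow> M b j = M j b"
    using insert.prems unfolding psd_def by blast
  have "0 \<le> M j j" by (rule psd_diag_nonneg[OF fin insert.prems]) simp
  define w where "w a = (if M j j = 0 then 0 else M j a / sqrt (M j j))" for a
  have w_w: "w a * w b = M j a * M j b / M j j" for a b
    using \<open>0 \<le> M j j\<close> unfolding w_def by (simp add: field_simps)
  have row: "M j b = w j * w b" if "b \<in> insert j J" for b
    using psd_zero_diag_row[OF fin insert.prems _ _ that] by (cases "M j j = 0") (simp_all add: w_w)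
  have "psd J (\<lambda>a b. M a b - w a * w b)"
  proof (cases "M j j = 0")
    case True
    then show ?thesis using psd_subset[OF fin _ insert.prems] unfolding w_def by auto
  next
    case False
    then show ?thesis using psd_schur_complement[OF insert.hyps insert.prems] \<open>0 \<le> M j j\<close>
      unfolding w_w by simp
  qed
  then obtain k :: nat and V where V: "\<forall>a\<in>J. \<forall>b\<in>J. M a b - w a * w b = (\<Sum>i<k. V i a * V i b)"
    using insert.IH by blast
  define V' where "V' i = (if i < k then (V i)(j := 0) else w)" for i
  have "M a b = (\<Sum>i<Suc k. V' i a * V' i b)" if a: "a \<in> insert j J" and b: "b \<in> insert j J" for a b
  proof -
    have "M a b = (\<Sum>i<k. V' i a * V' i b) + w a * w b"
    proof (cases "a = j \<or> b = j")
      case True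
      then show ?thesis using row[OF a] row[OF b] row_sym[OF a] unfolding V'_def
        by (auto simp: mult.commute)
    next
      case False
      with V a b show ?thesis unfolding V'_def by (simp add: algebra_simps)
    qed
    thus ?thesis by (simp add: V'_def)
  qed
  thus ?case by blast
qed

lemma tr_inner_psd_nonneg:
  assumes "finite J" "psd J L" "psd J M"
  shows "0 \<le> tr_inner J L M"
proof -
  obtain k :: nat and V where V: "\<forall>a\<in>J. \<forall>b\<in>J. M a b = (\<Sum>i<k. V i a * V i b)"
    using psd_sum_of_rank_one[OF assms(1,3)] by blast
  have "tr_inner J L M = (\<Sum>a\<in>J. \<Sum>b\<in>J. L a b * (\<Sum>i<k. V i b * V i a))"
    unfolding tr_inner_def using V by (intro sum.cong refl) auto
  also have "\<dots> = (\<Sum>i<k. quad_form J L (V i))"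
    unfolding quad_form_def by (simp add: sum_distrib_left algebra_simps sum.swap[of _ "{..<k}"])
  also have "\<dots> \<ge> 0" using assms(2) unfolding psd_iff_quad_form by (simp add: sum_nonneg)
  finally show ?thesis .
qed

section \<open>Multi-indices and polynomials\<close>

definition var_idx :: "nat \<Rightarrow> mindex" where
  "var_idx i = (\<lambda>j. if j = i then 1 else 0)"

definition sq_var_idx :: "nat \<Rightarrow> mindex" where
  "sq_var_idx i = (\<lambda>j. if j = i then 2 else 0)"

lemma add_idx_comm: "add_idx a b = add_idx b a"
  unfolding add_idx_def by (simp add: add.commute)

lemma add_idx_zero [simp]: "add_idx a zero_idx = a" "add_idx zero_idx a = a"
  unfolding add_idx_def zero_idx_def by auto

lemma add_idx_var_idx_sq:
  "add_idx (add_idx c (var_idx j)) (add_idx c (var_idx j)) = add_idx (add_idx c c) (sq_var_idx j)"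
  unfolding add_idx_def var_idx_def sq_var_idx_def by auto

lemma sq_var_idx_ne_zero: "sq_var_idx j \<noteq> zero_idx"
proof
  assume "sq_var_idx j = zero_idx"
  hence "sq_var_idx j j = zero_idx j" by simp
  thus False by (simp add: sq_var_idx_def zero_idx_def)
qed

lemma inj_sq_var_idx: "inj sq_var_idx"
proof (rule injI)
  fix i j assume "sq_var_idx i = sq_var_idx j"
  hence "sq_var_idx i i = sq_var_idx j i" by simp
  thus "i = j" by (simp add: sq_var_idx_def split: if_splits)
qed

lemma mdeg_add_idx: "mdeg n (add_idx a b) = mdeg n a + mdeg n b"
  unfolding mdeg_def add_idx_def by (simp add: sum.distrib)

lemma mdeg_var_idx: "j < n \<Longrightarrow> mdeg n (var_idx j) = 1"
  unfolding mdeg_def var_idx_def by simp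

lemma mdeg_sq_var_idx: "j < n \<Longrightarrow> mdeg n (sq_var_idx j) = 2"
  unfolding mdeg_def sq_var_idx_def by simp

lemma mdeg_zero_idx [simp]: "mdeg n zero_idx = 0"
  unfolding mdeg_def zero_idx_def by simp

lemma mdeg_ge_component: "i < n \<Longrightarrow> a i \<le> mdeg n a"
  unfolding mdeg_def by (intro member_le_sum) auto

lemma zero_idx_in_mons_upto [simp]: "zero_idx \<in> mons_upto n k"
  unfolding mons_upto_def mdeg_def zero_idx_def by simp

lemma mons_upto_mono: "k \<le> k' \<Longrightarrow> mons_upto n k \<subseteq> mons_upto n k'"
  unfolding mons_upto_def by auto

lemma add_idx_in_mons_upto:
  "a \<in> mons_upto n k \<Longrightarrow> b \<in> mons_upto n k' \<Longrightarrow> add_idx a b \<in> mons_upto n (k + k')"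
  using mdeg_add_idx[of n a b] unfolding mons_upto_def add_idx_def by auto

lemma var_idx_in_mons_upto: "j < n \<Longrightarrow> var_idx j \<in> mons_upto n 1"
  using mdeg_var_idx[of j n] unfolding mons_upto_def var_idx_def by auto

lemma mons_upto_0:
  assumes "a \<in> mons_upto n 0"
  shows "a = zero_idx"
proof
  fix j
  show "a j = zero_idx j"
    using assms mdeg_ge_component[of j n a] unfolding mons_upto_def zero_idx_def
    by (cases "j < n") auto
qed

lemma finite_mons_upto: "finite (mons_upto n k)"
proof (rule finite_subset)
  show "mons_upto n k \<subseteq> {a. \<forall>x. (x \<in> {..<n} \<longrightarrow> a x \<in> {..k}) \<and> (x \<notin> {..<n} \<longrightarrow> a x = 0)}"
  proof
    fix a assume a: "a \<in> mons_upto n k"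
    have "a x \<le> k" if "x < n" for x
      using mdeg_ge_component[OF that, of a] a unfolding mons_upto_def by simp
    thus "a \<in> {a. \<forall>x. (x \<in> {..<n} \<longrightarrow> a x \<in> {..k}) \<and> (x \<notin> {..<n} \<longrightarrow> a x = 0)}"
      using a unfolding mons_upto_def by auto
  qed
  show "finite {a. \<forall>x. (x \<in> {..<n} \<longrightarrow> a x \<in> {..k}) \<and> (x \<notin> {..<n} \<longrightarrow> a x = 0)}"
    by (rule finite_set_of_finite_funs) auto
qed

lemma mons_upto_Suc_split:
  assumes "c \<in> mons_upto n (Suc k)" "0 < mdeg n c"
  obtains i c' where "i < n" "c = add_idx c' (var_idx i)" "c' \<in> mons_upto n k" "mdeg n c' = mdeg n c - 1"
proof -
  have "\<exists>i<n. 0 < c i"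
  proof (rule ccontr)
    assume "\<not> (\<exists>i<n. 0 < c i)"
    hence "mdeg n c = 0" unfolding mdeg_def by simp
    thus False using assms(2) by simp
  qed
  then obtain i where i: "i < n" "0 < c i" by blast
  define c' where "c' = c(i := c i - 1)"
  have c: "c = add_idx c' (var_idx i)" unfolding c'_def add_idx_def var_idx_def using i by auto
  have "mdeg n c' = mdeg n c - 1"
    using c mdeg_add_idx[of n c' "var_idx i"] mdeg_var_idx[OF i(1)] by simp
  moreover have "\<forall>j\<ge>n. c' j = 0" using assms(1) i unfolding c'_def mons_upto_def by auto
  ultimately show ?thesis using that[OF i(1) c] assms(1) unfolding mons_upto_def by auto
qed

lemma mons_upto_add_split:
  assumes "c \<in> mons_upto n (k + k')"
  obtains a b where "c = add_idx a b" "a \<in> mons_upto n k" "b \<in> mons_upto n k'"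
  using assms
proof (induction k arbitrary: c thesis)
  case 0
  then show ?case using 0(1)[of zero_idx c] by simp
next
  case (Suc k)
  show ?case
  proof (cases "c \<in> mons_upto n (k + k')")
    case True
    then obtain a b where "c = add_idx a b" "a \<in> mons_upto n k" "b \<in> mons_upto n k'"
      using Suc.IH by blast
    moreover have "mons_upto n k \<subseteq> mons_upto n (Suc k)" by (simp add: mons_upto_mono)
    ultimately show ?thesis using Suc.prems(1) by blast
  next
    case False
    then have "0 < mdeg n c" using Suc.prems(2) unfolding mons_upto_def by auto
    moreover have "c \<in> mons_upto n (Suc (k + k'))" using Suc.prems(2) by simp
    ultimately obtain i c' where i: "i < n" "c = add_idx c' (var_idx i)" "c' \<in> mons_upto n (k + k')"
      using mons_upto_Suc_split by blast
    then obtain a b where ab: "c' = add_idx a b" "a \<in> mons_upto n k" "b \<in> mons_upto n k'"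
      using Suc.IH by blast
    have "add_idx a (var_idx i) \<in> mons_upto n (Suc k)"
      using add_idx_in_mons_upto[OF ab(2) var_idx_in_mons_upto[OF i(1)]] by simp
    moreover have "c = add_idx (add_idx a (var_idx i)) b"
      using i(2) ab(1) by (simp add: add_idx_def fun_eq_iff)
    ultimately show ?thesis using Suc.prems(1) ab(3) by blast
  qed
qed

lemma poly_support_finite: "is_poly n q \<Longrightarrow> finite {c. q c \<noteq> 0}"
  unfolding is_poly_def by simp

lemma poly_support_subset_mons_upto:
  assumes "is_poly n q"
  shows "{c. q c \<noteq> 0} \<subseteq> mons_upto n (pdeg n q)"
proof
  fix c assume "c \<in> {c. q c \<noteq> 0}"
  moreover have "finite (insert 0 {mdeg n a | a. q a \<noteq> 0})"
    using poly_support_finite[OF assms] by (simp add: setcompr_eq_image)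
  ultimately have "mdeg n c \<le> pdeg n q" unfolding pdeg_def by (intro Max_ge) auto
  thus "c \<in> mons_upto n (pdeg n q)"
    using assms \<open>c \<in> {c. q c \<noteq> 0}\<close> unfolding mons_upto_def is_poly_def by auto
qed

lemma one_poly_support: "{c. one_poly c \<noteq> 0} = {zero_idx}"
  unfolding one_poly_def by auto

lemma is_poly_one_poly: "is_poly n one_poly"
  unfolding is_poly_def one_poly_def zero_idx_def by auto

lemma pdeg_one_poly: "pdeg n one_poly = 0"
proof -
  have "{mdeg n a | a. one_poly a \<noteq> 0} = {0}" unfolding one_poly_def by auto
  thus ?thesis unfolding pdeg_def by simp
qed

lemma ball_poly_support: "ball_poly n R c \<noteq> 0 \<Longrightarrow> c \<in> insert zero_idx (sq_var_idx ` {..<n})"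
  unfolding ball_poly_def sq_var_idx_def by (auto split: if_splits)

lemma ball_poly_zero_idx: "ball_poly n R zero_idx = R\<^sup>2"
  unfolding ball_poly_def by simp

lemma ball_poly_sq_var_idx: "j < n \<Longrightarrow> ball_poly n R (sq_var_idx j) = -1"
  using sq_var_idx_ne_zero[of j] unfolding ball_poly_def sq_var_idx_def by auto

lemma finite_ball_poly_support: "finite {c. ball_poly n R c \<noteq> 0}"
  by (rule finite_subset[of _ "insert zero_idx (sq_var_idx ` {..<n})"]) (auto dest: ball_poly_support)

lemma pdeg_ball_poly: "pdeg n (ball_poly n R) \<le> 2"
proof -
  have "{mdeg n a | a. ball_poly n R a \<noteq> 0} \<subseteq> mdeg n ` insert zero_idx (sq_var_idx ` {..<n})"
    using ball_poly_support by blast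
  moreover have "\<forall>x\<in>mdeg n ` insert zero_idx (sq_var_idx ` {..<n}). x \<le> 2"
    using mdeg_sq_var_idx by auto
  ultimately show ?thesis
    unfolding pdeg_def by (subst Max_le_iff) (auto intro: finite_subset)
qed

lemma Amat_eq_sum_support:
  assumes "finite {c. q c \<noteq> 0}"
  shows "Amat q al a b = (\<Sum>c\<in>{c. q c \<noteq> 0}. if add_idx (add_idx a b) c = al then q c else 0)"
proof -
  have "{c. q c \<noteq> 0 \<and> add_idx (add_idx a b) c = al} = {c \<in> {c. q c \<noteq> 0}. add_idx (add_idx a b) c = al}"
    by auto
  thus ?thesis unfolding Amat_def using sum.inter_filter[OF assms] by simp
qed

lemma Amat_one_poly: "Amat one_poly al a b = unit_vec (add_idx a b) al"
  using Amat_eq_sum_support[of one_poly al a b] by (auto simp: one_poly_support one_poly_def unit_vec_def)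

lemma Amat_ball_poly_diag:
  "Amat (ball_poly n R) al c c
     = R\<^sup>2 * unit_vec (add_idx c c) al - (\<Sum>j<n. unit_vec (add_idx (add_idx c c) (sq_var_idx j)) al)"
proof -
  let ?F = "\<lambda>\<gamma>. if add_idx (add_idx c c) \<gamma> = al then ball_poly n R \<gamma> else 0"
  have "zero_idx \<notin> sq_var_idx ` {..<n}" using sq_var_idx_ne_zero by (metis imageE)
  moreover have "Amat (ball_poly n R) al c c = (\<Sum>\<gamma>\<in>insert zero_idx (sq_var_idx ` {..<n}). ?F \<gamma>)"
    unfolding Amat_eq_sum_support[OF finite_ball_poly_support]
    by (rule sum.mono_neutral_left) (auto dest: ball_poly_support)
  ultimately have "Amat (ball_poly n R) al c c = ?F zero_idx + (\<Sum>j<n. ?F (sq_var_idx j))"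
    using inj_on_subset[OF inj_sq_var_idx] by (simp add: sum.reindex)
  moreover have "?F zero_idx = R\<^sup>2 * unit_vec (add_idx c c) al"
    by (auto simp: ball_poly_zero_idx unit_vec_def)
  moreover have "(\<Sum>j<n. ?F (sq_var_idx j)) = - (\<Sum>j<n. unit_vec (add_idx (add_idx c c) (sq_var_idx j)) al)"
    unfolding sum_negf[symmetric] by (intro sum.cong) (auto simp: ball_poly_sq_var_idx unit_vec_def)
  ultimately show ?thesis by simp
qed

lemma locmat_sym: "locmat q y a b = locmat q y b a"
  unfolding locmat_def by (simp add: add_idx_comm)

lemma sum_moments_Amat:
  assumes "finite I" "finite {c. q c \<noteq> 0}"
    and "\<And>c. q c \<noteq> 0 \<Longrightarrow> add_idx (add_idx a b) c \<in> I"
  shows "(\<Sum>al\<in>I. y al * Amat q al a b) = locmat q y a b"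
proof -
  have "(\<Sum>al\<in>I. y al * Amat q al a b)
      = (\<Sum>c\<in>{c. q c \<noteq> 0}. \<Sum>al\<in>I. if add_idx (add_idx a b) c = al then y al * q c else 0)"
    unfolding Amat_eq_sum_support[OF assms(2)] sum_distrib_left
    by (subst sum.swap) (simp add: if_distrib cong: if_cong)
  also have "\<dots> = locmat q y a b"
    unfolding locmat_def using assms by (intro sum.cong refl) (simp add: sum.delta mult.commute)
  finally show ?thesis .
qed

lemma quad_form_eq_tr_inner: "quad_form J M v = tr_inner J M (\<lambda>a b. v a * v b)"
  unfolding quad_form_def tr_inner_def by (intro sum.cong refl) (simp add: algebra_simps)

section \<open>Weak duality and the truncated quadratic module\<close>

locale lasserre_relaxation =
  fixes n m d :: nat and f :: rpoly and g :: "nat \<Rightarrow> rpoly"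
  assumes f_poly: "is_poly n f"
    and g_poly: "\<forall>i\<in>{1..m}. is_poly n (g i)"
    and deg_f: "pdeg n f \<le> 2 * d"
    and dmin_le: "dmin n g m \<le> d"
begin

abbreviation moments :: "mindex set" where
  "moments \<equiv> mons_upto n (2 * d)"

abbreviation block :: "nat \<Rightarrow> mindex set" where
  "block i \<equiv> mons_upto n (d - dloc n g i)"

lemma gg_poly: "i \<le> m \<Longrightarrow> is_poly n (gg g i)"
  using g_poly is_poly_one_poly unfolding gg_def by (cases "i = 0") auto

lemma dloc_le: "i \<le> m \<Longrightarrow> dloc n g i \<le> d"
proof -
  assume "i \<le> m"
  hence "dloc n g i \<le> dmin n g m" unfolding dmin_def by (intro Max_ge) auto
  thus ?thesis using dmin_le by simp
qed

lemma localizing_idx_in_moments: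
  assumes i: "i \<le> m" and "a \<in> block i" "b \<in> block i" and c: "gg g i c \<noteq> 0"
  shows "add_idx (add_idx a b) c \<in> moments"
proof -
  have "pdeg n (gg g i) \<le> 2 * dloc n g i" unfolding dloc_def by simp
  hence deg: "(d - dloc n g i) + (d - dloc n g i) + pdeg n (gg g i) \<le> 2 * d"
    using dloc_le[OF i] by linarith
  have "c \<in> mons_upto n (pdeg n (gg g i))"
    using poly_support_subset_mons_upto[OF gg_poly[OF i]] c by blast
  hence "add_idx (add_idx a b) c \<in> mons_upto n ((d - dloc n g i) + (d - dloc n g i) + pdeg n (gg g i))"
    by (intro add_idx_in_mons_upto assms(2,3))
  with deg show ?thesis using mons_upto_mono[of _ "2 * d" n] by blast
qed

lemma objective_eq_sum_moments: "(\<Sum>a\<in>{a. f a \<noteq> 0}. f a * y a) = (\<Sum>a\<in>moments. f a * y a)"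
proof -
  have "{a. f a \<noteq> 0} \<subseteq> moments"
    using poly_support_subset_mons_upto[OF f_poly] mons_upto_mono[OF deg_f] by blast
  thus ?thesis by (intro sum.mono_neutral_left finite_mons_upto) auto
qed

lemma sum_moments_tr_inner:
  assumes "i \<le> m"
  shows "(\<Sum>al\<in>moments. y al * tr_inner (block i) (Amat (gg g i) al) W) = tr_inner (block i) (locmat (gg g i) y) W"
proof -
  have "(\<Sum>al\<in>moments. y al * tr_inner (block i) (Amat (gg g i) al) W)
      = (\<Sum>a\<in>block i. \<Sum>b\<in>block i. (\<Sum>al\<in>moments. y al * Amat (gg g i) al a b) * W b a)"
    unfolding tr_inner_def sum_distrib_left sum_distrib_right
    by (subst sum.swap, rule sum.cong[OF refl], subst sum.swap) (simp add: mult.assoc)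
  also have "\<dots> = tr_inner (block i) (locmat (gg g i) y) W"
    unfolding tr_inner_def using assms localizing_idx_in_moments poly_support_finite[OF gg_poly]
    by (simp add: sum_moments_Amat finite_mons_upto)
  finally show ?thesis .
qed

lemma weak_duality:
  assumes P: "P_feas n g m d y" and D: "D_feas n f g m d z Z"
  shows "z \<le> (\<Sum>a\<in>{a. f a \<noteq> 0}. f a * y a)"
proof -
  have Z: "\<forall>al\<in>moments. f al = z * unit_vec zero_idx al + (\<Sum>i\<le>m. tr_inner (block i) (Amat (gg g i) al) (Z i))"
    using D unfolding D_feas_def unit_vec_def by (auto simp: algebra_simps)
  have "(\<Sum>a\<in>moments. f a * y a)
      = z * (\<Sum>a\<in>moments. unit_vec zero_idx a * y a) + (\<Sum>i\<le>m. \<Sum>a\<in>moments. y a * tr_inner (block i) (Amat (gg g i) a) (Z i))"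
    using Z by (simp add: algebra_simps sum.distrib sum_distrib_left sum_distrib_right sum.swap[of _ "{..m}"])
  also have "\<dots> = z + (\<Sum>i\<le>m. tr_inner (block i) (locmat (gg g i) y) (Z i))"
    using P unfolding P_feas_def by (simp add: sum_unit_vec sum_moments_tr_inner finite_mons_upto)
  also have "\<dots> \<ge> z"
    using P D unfolding P_feas_def D_feas_def by (auto intro: sum_nonneg tr_inner_psd_nonneg finite_mons_upto)
  finally show ?thesis by (simp add: objective_eq_sum_moments)
qed

text \<open>The degree-2d truncated quadratic module in coefficient form: the polynomials
  \<Sum>i g_i \<sigma>_i with \<sigma>_i a sum of squares of degree at most 2(d - d_i) with Gram matrix Z i,
  restricted to monomials of degree at most 2d.\<close>

definition qmodule :: "rpoly set" where
  "qmodule = {h. \<exists>Z. (\<forall>i\<le>m. psd (block i) (Z i)) \<and>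
     (\<forall>al\<in>moments. h al = (\<Sum>i\<le>m. tr_inner (block i) (Amat (gg g i) al) (Z i)))}"

lemma dual_feasible_iff: "(\<exists>Z. D_feas n f g m d z Z) \<longleftrightarrow> (\<lambda>al. f al - z * unit_vec zero_idx al) \<in> qmodule"
  unfolding D_feas_def qmodule_def unit_vec_def by (simp add: if_distrib cong: if_cong)

lemma qmodule_cong: "h \<in> qmodule \<Longrightarrow> \<forall>al\<in>moments. h' al = h al \<Longrightarrow> h' \<in> qmodule"
  unfolding qmodule_def by auto

lemma qmodule_zero: "(\<lambda>_. 0) \<in> qmodule"
  unfolding qmodule_def
  by (intro CollectI exI[of _ "\<lambda>i a b. 0"]) (simp add: psd_zero tr_inner_def)

lemma qmodule_comb:
  assumes "h \<in> qmodule" "h' \<in> qmodule" "0 \<le> r" "0 \<le> s"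
  shows "(\<lambda>a. r * h a + s * h' a) \<in> qmodule"
proof -
  obtain Z Z' where Z: "\<forall>i\<le>m. psd (block i) (Z i)"
      "\<forall>al\<in>moments. h al = (\<Sum>i\<le>m. tr_inner (block i) (Amat (gg g i) al) (Z i))"
    and Z': "\<forall>i\<le>m. psd (block i) (Z' i)"
      "\<forall>al\<in>moments. h' al = (\<Sum>i\<le>m. tr_inner (block i) (Amat (gg g i) al) (Z' i))"
    using assms(1,2) unfolding qmodule_def by blast
  show ?thesis unfolding qmodule_def
    by (intro CollectI exI[of _ "\<lambda>i a b. r * Z i a b + s * Z' i a b"])
       (simp add: Z Z' assms(3,4) psd_comb tr_inner_comb sum.distrib sum_distrib_left)
qed

lemma qmodule_add: "h \<in> qmodule \<Longrightarrow> h' \<in> qmodule \<Longrightarrow> (\<lambda>a. h a + h' a) \<in> qmodule"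
  using qmodule_comb[of h h' 1 1] by simp

lemma qmodule_scale: "h \<in> qmodule \<Longrightarrow> 0 \<le> r \<Longrightarrow> (\<lambda>a. r * h a) \<in> qmodule"
  using qmodule_comb[OF _ qmodule_zero, of h r 0] by simp

lemma qmodule_sum: "finite S \<Longrightarrow> (\<And>j. j \<in> S \<Longrightarrow> h j \<in> qmodule) \<Longrightarrow> (\<lambda>al. \<Sum>j\<in>S. h j al) \<in> qmodule"
  by (induction S rule: finite_induct) (simp_all add: qmodule_zero qmodule_add)

lemma localizing_square_in_qmodule:
  assumes "i \<le> m"
  shows "(\<lambda>al. quad_form (block i) (Amat (gg g i) al) v) \<in> qmodule"
proof -
  define Z where "Z j = (if j = i then (\<lambda>a b. v a * v b) else (\<lambda>a b. 0))" for j
  have "psd (block j) (Z j)" for j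
    unfolding Z_def by (simp add: psd_outer psd_zero)
  moreover have "(\<Sum>j\<le>m. tr_inner (block j) (Amat (gg g j) al) (Z j)) = quad_form (block i) (Amat (gg g i) al) v" for al
    using assms unfolding Z_def quad_form_eq_tr_inner by (simp add: if_distrib tr_inner_def cong: if_cong)
  ultimately show ?thesis unfolding qmodule_def by (intro CollectI exI[of _ Z]) simp
qed

lemma primal_feasible_of_nonneg_on_qmodule:
  assumes "y zero_idx = 1" and nonneg: "\<And>h. h \<in> qmodule \<Longrightarrow> 0 \<le> (\<Sum>al\<in>moments. y al * h al)"
  shows "P_feas n g m d y"
  unfolding P_feas_def psd_iff_quad_form
proof (intro conjI allI impI ballI)
  fix i v assume i: "i \<le> m"
  have "(\<Sum>al\<in>moments. y al * quad_form (block i) (Amat (gg g i) al) v) = quad_form (block i) (locmat (gg g i) y) v"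
    using sum_moments_tr_inner[OF i] by (simp add: quad_form_eq_tr_inner)
  thus "0 \<le> quad_form (block i) (locmat (gg g i) y) v"
    using nonneg[OF localizing_square_in_qmodule[OF i, of v]] by simp
qed (use assms(1) locmat_sym in auto)

lemma valD_le_valP: "valD n f g m d \<le> valP n f g m d"
  unfolding valD_def valP_def
proof (intro Sup_least Inf_greatest)
  fix x w
  assume "x \<in> {ereal z | z. \<exists>Z. D_feas n f g m d z Z}"
    and "w \<in> {ereal (\<Sum>a\<in>{a. f a \<noteq> 0}. f a * y a) | y. P_feas n g m d y}"
  thus "x \<le> w" using weak_duality by fastforce
qed

end

section \<open>Strong duality under a ball constraint\<close>

locale lasserre_ball = lasserre_relaxation +
  fixes R :: real
  assumes m_pos: "1 \<le> m" and g_m_ball: "g m = ball_poly n R"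
begin

lemma gg_0: "gg g 0 = one_poly"
  unfolding gg_def by simp

lemma gg_m: "gg g m = ball_poly n R"
  unfolding gg_def using m_pos g_m_ball by simp

lemma block_0: "block 0 = mons_upto n d"
  unfolding dloc_def gg_0 pdeg_one_poly by simp

lemma mons_upto_pred_subset_block_m: "mons_upto n (d - 1) \<subseteq> block m"
proof -
  have "dloc n g m \<le> 1" unfolding dloc_def gg_m using pdeg_ball_poly[of n R] by simp
  thus ?thesis by (intro mons_upto_mono) simp
qed

lemma square_in_qmodule: "a \<in> mons_upto n d \<Longrightarrow> unit_vec (add_idx a a) \<in> qmodule"
  using localizing_square_in_qmodule[of 0 "unit_vec a"]
  by (simp add: block_0 gg_0 quad_form_unit_vec finite_mons_upto Amat_one_poly)

lemma binomial_square_in_qmodule: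
  assumes "a \<in> mons_upto n d" "b \<in> mons_upto n d" "s * s = 1"
  shows "(\<lambda>al. unit_vec (add_idx a a) al + unit_vec (add_idx b b) al + 2 * s * unit_vec (add_idx a b) al) \<in> qmodule"
  using localizing_square_in_qmodule[of 0 "\<lambda>x. unit_vec a x + s * unit_vec b x"] assms
  by (simp add: block_0 gg_0 quad_form_two_unit_vecs finite_mons_upto Amat_one_poly add_idx_comm[of b a] algebra_simps)

lemma ball_times_square_in_qmodule:
  assumes "c \<in> mons_upto n (d - 1)"
  shows "(\<lambda>al. R\<^sup>2 * unit_vec (add_idx c c) al - (\<Sum>j<n. unit_vec (add_idx (add_idx c c) (sq_var_idx j)) al)) \<in> qmodule"
  using localizing_square_in_qmodule[of m "unit_vec c"] assms mons_upto_pred_subset_block_m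
  by (simp add: gg_m quad_form_unit_vec finite_mons_upto Amat_ball_poly_diag subset_iff)

lemma ball_step_in_qmodule:
  assumes c: "c \<in> mons_upto n k" and "k < d" and i: "i < n"
  shows "(\<lambda>al. R\<^sup>2 * unit_vec (add_idx c c) al - unit_vec (add_idx (add_idx c c) (sq_var_idx i)) al) \<in> qmodule"
proof -
  let ?sq = "\<lambda>j al. unit_vec (add_idx (add_idx c c) (sq_var_idx j)) al"
  have "add_idx c (var_idx j) \<in> mons_upto n d" if "j < n" for j
    using add_idx_in_mons_upto[OF c var_idx_in_mons_upto[OF that]] mons_upto_mono[of "k + 1" d n] \<open>k < d\<close>
    by auto
  hence "(\<lambda>al. \<Sum>j\<in>{..<n} - {i}. ?sq j al) \<in> qmodule"
    by (intro qmodule_sum) (auto simp flip: add_idx_var_idx_sq intro: square_in_qmodule)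
  moreover have "c \<in> mons_upto n (d - 1)"
    using c \<open>k < d\<close> mons_upto_mono[of k "d - 1" n] by (simp add: subset_iff)
  ultimately have "(\<lambda>al. R\<^sup>2 * unit_vec (add_idx c c) al - (\<Sum>j<n. ?sq j al) + (\<Sum>j\<in>{..<n} - {i}. ?sq j al)) \<in> qmodule"
    using qmodule_add ball_times_square_in_qmodule by blast
  moreover have "(\<Sum>j<n. ?sq j al) = ?sq i al + (\<Sum>j\<in>{..<n} - {i}. ?sq j al)" for al
    using i by (intro sum.remove) auto
  ultimately show ?thesis by simp
qed

lemma ball_power_in_qmodule:
  "c \<in> mons_upto n d \<Longrightarrow> (\<lambda>al. (R\<^sup>2) ^ mdeg n c * unit_vec zero_idx al - unit_vec (add_idx c c) al) \<in> qmodule"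
proof (induction "mdeg n c" arbitrary: c)
  case 0
  then have "c = zero_idx" using mons_upto_0[of c n] unfolding mons_upto_def by simp
  then show ?case using qmodule_zero 0 by simp
next
  case (Suc k)
  have "c \<in> mons_upto n (Suc k)" using Suc.prems Suc.hyps(2)[symmetric] unfolding mons_upto_def by simp
  then obtain i c' where i: "i < n" "c = add_idx c' (var_idx i)" "c' \<in> mons_upto n k" "mdeg n c' = k"
    using mons_upto_Suc_split Suc.hyps(2) by (metis diff_Suc_1 zero_less_Suc)
  have "k < d" using Suc.prems Suc.hyps(2) unfolding mons_upto_def by simp
  have "(\<lambda>al. R\<^sup>2 * ((R\<^sup>2) ^ k * unit_vec zero_idx al - unit_vec (add_idx c' c') al)
      + (R\<^sup>2 * unit_vec (add_idx c' c') al - unit_vec (add_idx (add_idx c' c') (sq_var_idx i)) al)) \<in> qmodule"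
    using Suc.hyps(1)[of c'] i \<open>k < d\<close> mons_upto_mono[of k d n]
    by (intro qmodule_add qmodule_scale ball_step_in_qmodule) auto
  moreover have "add_idx c c = add_idx (add_idx c' c') (sq_var_idx i)"
    using i(2) add_idx_var_idx_sq by simp
  ultimately show ?case using Suc.hyps(2)[symmetric] by (simp add: algebra_simps)
qed

lemma archimedean_qmodule:
  assumes al: "al \<in> moments" and s: "s * s = 1"
  shows "\<exists>t. (\<lambda>x. t * unit_vec zero_idx x + s * unit_vec al x) \<in> qmodule"
proof -
  obtain a b where ab: "al = add_idx a b" "a \<in> mons_upto n d" "b \<in> mons_upto n d"
    using al mons_upto_add_split[of al n d d] by (metis mult_2)
  define t where "t = ((R\<^sup>2) ^ mdeg n a + (R\<^sup>2) ^ mdeg n b) / 2"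
  have "(\<lambda>x. (1/2) * (unit_vec (add_idx a a) x + unit_vec (add_idx b b) x + 2 * s * unit_vec (add_idx a b) x)
      + ((1/2) * ((R\<^sup>2) ^ mdeg n a * unit_vec zero_idx x - unit_vec (add_idx a a) x)
      + (1/2) * ((R\<^sup>2) ^ mdeg n b * unit_vec zero_idx x - unit_vec (add_idx b b) x))) \<in> qmodule"
    using ab s by (intro qmodule_add qmodule_scale binomial_square_in_qmodule ball_power_in_qmodule) auto
  moreover have "(1/2) * (unit_vec (add_idx a a) x + unit_vec (add_idx b b) x + 2 * s * unit_vec (add_idx a b) x)
      + ((1/2) * ((R\<^sup>2) ^ mdeg n a * unit_vec zero_idx x - unit_vec (add_idx a a) x)
      + (1/2) * ((R\<^sup>2) ^ mdeg n b * unit_vec zero_idx x - unit_vec (add_idx b b) x))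
      = t * unit_vec zero_idx x + s * unit_vec al x" for x
    unfolding ab(1) t_def by (simp add: algebra_simps)
  ultimately show ?thesis by auto
qed

lemma objective_shift_in_qmodule: "\<exists>T. (\<lambda>al. f al + T * unit_vec zero_idx al) \<in> qmodule"
proof -
  have "\<exists>t. (\<lambda>x. t * unit_vec zero_idx x + f a * unit_vec a x) \<in> qmodule" if "f a \<noteq> 0" for a
  proof -
    have "a \<in> moments"
      using that poly_support_subset_mons_upto[OF f_poly] mons_upto_mono[OF deg_f] by blast
    moreover have "sgn (f a) * sgn (f a) = 1" using that by (simp add: sgn_if)
    ultimately obtain t where "(\<lambda>x. t * unit_vec zero_idx x + sgn (f a) * unit_vec a x) \<in> qmodule"
      using archimedean_qmodule by blast
    from qmodule_scale[OF this, of "\<bar>f a\<bar>"]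
    have "(\<lambda>x. (\<bar>f a\<bar> * t) * unit_vec zero_idx x + (\<bar>f a\<bar> * sgn (f a)) * unit_vec a x) \<in> qmodule"
      by (simp add: distrib_left mult.assoc)
    thus ?thesis unfolding abs_mult_sgn by blast
  qed
  then obtain t where t: "\<And>a. f a \<noteq> 0 \<Longrightarrow> (\<lambda>x. t a * unit_vec zero_idx x + f a * unit_vec a x) \<in> qmodule"
    by metis
  have "(\<lambda>x. \<Sum>a\<in>{a. f a \<noteq> 0}. t a * unit_vec zero_idx x + f a * unit_vec a x) \<in> qmodule"
    using t by (intro qmodule_sum poly_support_finite[OF f_poly]) auto
  moreover have "(\<Sum>a\<in>{a. f a \<noteq> 0}. t a * unit_vec zero_idx x + f a * unit_vec a x)
      = f x + (\<Sum>a\<in>{a. f a \<noteq> 0}. t a) * unit_vec zero_idx x" for x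
  proof -
    have "(\<Sum>a\<in>{a. f a \<noteq> 0}. f a * unit_vec a x) = f x"
      using poly_support_finite[OF f_poly] by (simp add: unit_vec_def if_distrib[of "\<lambda>u. _ * u"] sum.delta' cong: if_cong)
    thus ?thesis by (simp add: sum.distrib sum_distrib_right)
  qed
  ultimately show ?thesis by auto
qed

lemma one_in_qmodule: "unit_vec zero_idx \<in> qmodule"
  using square_in_qmodule[of zero_idx] by simp

lemma objective_shifts_in_qmodule_if_neg_one:
  assumes "(\<lambda>a. - unit_vec zero_idx a) \<in> qmodule"
  shows "(\<lambda>al. f al - z * unit_vec zero_idx al) \<in> qmodule"
proof -
  obtain T where T: "(\<lambda>al. f al + T * unit_vec zero_idx al) \<in> qmodule"
    using objective_shift_in_qmodule by blast
  consider "0 \<le> T + z" | "0 \<le> - (T + z)" by linarith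
  then show ?thesis
  proof cases
    case 1
    from qmodule_comb[OF T assms zero_le_one 1] show ?thesis by (simp add: algebra_simps)
  next
    case 2
    from qmodule_comb[OF T one_in_qmodule zero_le_one 2] show ?thesis by (simp add: algebra_simps)
  qed
qed

lemma neg_one_not_in_cone:
  assumes "(\<lambda>al. f al - z * unit_vec zero_idx al) \<notin> qmodule" "u \<in> qmodule" "0 \<le> l"
  shows "\<not> (\<forall>a\<in>moments. u a - l * (f a - z * unit_vec zero_idx a) = - unit_vec zero_idx a)"
proof
  assume eq: "\<forall>a\<in>moments. u a - l * (f a - z * unit_vec zero_idx a) = - unit_vec zero_idx a"
  show False
  proof (cases "l = 0")
    case True
    then have "(\<lambda>a. - unit_vec zero_idx a) \<in> qmodule" using eq assms(2) qmodule_cong by auto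
    then show False using assms(1) objective_shifts_in_qmodule_if_neg_one by blast
  next
    case False
    with assms(3) have "0 \<le> 1 / l" by simp
    from qmodule_comb[OF assms(2) one_in_qmodule this this]
    have "(\<lambda>al. f al - z * unit_vec zero_idx al) \<in> qmodule"
      by (rule qmodule_cong) (use eq False in \<open>auto simp: field_simps\<close>)
    then show False using assms(1) by blast
  qed
qed

lemma separating_moment_vector:
  assumes "(\<lambda>al. f al - z * unit_vec zero_idx al) \<notin> qmodule"
  obtains y where "y zero_idx = 1" "\<And>h. h \<in> qmodule \<Longrightarrow> 0 \<le> (\<Sum>a\<in>moments. y a * h a)"
    and "0 \<le> (\<Sum>a\<in>moments. y a * (z * unit_vec zero_idx a - f a))"
proof -
  define C where "C = {h. \<exists>u\<in>qmodule. \<exists>l\<ge>0. h = (\<lambda>a. u a - l * (f a - z * unit_vec zero_idx a))}"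
  have qmodule_C: "qmodule \<subseteq> C" unfolding C_def by force
  have "\<exists>y. y zero_idx = 1 \<and> (\<forall>h\<in>C. 0 \<le> (\<Sum>a\<in>moments. y a * h a))"
  proof (rule cone_separation)
    fix h h' and r s :: real assume "h \<in> C" "h' \<in> C" "0 \<le> r" "0 \<le> s"
    then obtain u l u' l' where "u \<in> qmodule" "0 \<le> l" "h = (\<lambda>a. u a - l * (f a - z * unit_vec zero_idx a))"
      and "u' \<in> qmodule" "0 \<le> l'" "h' = (\<lambda>a. u' a - l' * (f a - z * unit_vec zero_idx a))"
      unfolding C_def by blast
    with \<open>0 \<le> r\<close> \<open>0 \<le> s\<close> show "(\<lambda>a. r * h a + s * h' a) \<in> C" unfolding C_def
      by (intro CollectI bexI[of _ "\<lambda>a. r * u a + s * u' a"] exI[of _ "r * l + s * l'"])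
         (auto simp: qmodule_comb algebra_simps)
  next
    fix b and s :: real assume "b \<in> moments" "s = 1 \<or> s = -1"
    then obtain t where "(\<lambda>x. t * unit_vec zero_idx x + s * unit_vec b x) \<in> qmodule"
      using archimedean_qmodule[of b s] by auto
    then show "\<exists>t. \<exists>h\<in>C. \<forall>a\<in>moments. h a = t * unit_vec zero_idx a + s * unit_vec b a"
      using qmodule_C by (intro exI[of _ t] bexI[of _ "\<lambda>x. t * unit_vec zero_idx x + s * unit_vec b x"]) auto
  next
    fix h assume "h \<in> C"
    then show "\<not> (\<forall>a\<in>moments. h a = - unit_vec zero_idx a)"
      using neg_one_not_in_cone[OF assms] unfolding C_def by fastforce
  qed (simp_all add: finite_mons_upto)
  then obtain y where y0: "y zero_idx = 1" and y_C: "\<forall>h\<in>C. 0 \<le> (\<Sum>a\<in>moments. y a * h a)" by blast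
  have "(\<lambda>a. z * unit_vec zero_idx a - f a) \<in> C" unfolding C_def
    by (intro CollectI bexI[of _ "\<lambda>_. 0"] exI[of _ 1]) (auto simp: qmodule_zero)
  with y_C have "0 \<le> (\<Sum>a\<in>moments. y a * (z * unit_vec zero_idx a - f a))" by (metis (no_types))
  with y0 y_C qmodule_C show ?thesis by (intro that) auto
qed

lemma primal_le_of_dual_infeasible:
  assumes "\<not> (\<exists>Z. D_feas n f g m d z Z)"
  shows "\<exists>y. P_feas n g m d y \<and> (\<Sum>a\<in>{a. f a \<noteq> 0}. f a * y a) \<le> z"
proof -
  obtain y where y0: "y zero_idx = 1" and nonneg: "\<And>h. h \<in> qmodule \<Longrightarrow> 0 \<le> (\<Sum>a\<in>moments. y a * h a)"
    and sep: "0 \<le> (\<Sum>a\<in>moments. y a * (z * unit_vec zero_idx a - f a))"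
    using separating_moment_vector assms dual_feasible_iff by blast
  note sep
  also have "\<dots> = z * (\<Sum>a\<in>moments. unit_vec zero_idx a * y a) - (\<Sum>a\<in>moments. f a * y a)"
    by (simp add: algebra_simps sum_subtractf sum_distrib_left)
  finally have "(\<Sum>a\<in>{a. f a \<noteq> 0}. f a * y a) \<le> z"
    using y0 by (simp add: objective_eq_sum_moments sum_unit_vec finite_mons_upto)
  moreover have "P_feas n g m d y" using y0 nonneg by (rule primal_feasible_of_nonneg_on_qmodule)
  ultimately show ?thesis by blast
qed

lemma dual_feasible: "\<exists>z Z. D_feas n f g m d z Z"
proof -
  obtain T where "(\<lambda>al. f al + T * unit_vec zero_idx al) \<in> qmodule"
    using objective_shift_in_qmodule by blast
  hence "(\<lambda>al. f al - (- T) * unit_vec zero_idx al) \<in> qmodule" by simp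
  thus ?thesis using dual_feasible_iff by blast
qed

lemma valD_gt_minus_infinity: "-\<infinity> < valD n f g m d"
proof -
  obtain z Z where "D_feas n f g m d z Z" using dual_feasible by blast
  hence "ereal z \<le> valD n f g m d" unfolding valD_def by (intro Sup_upper) blast
  thus ?thesis by (rule less_le_trans[rotated]) simp
qed

lemma valP_le_valD: "valP n f g m d \<le> valD n f g m d"
proof (rule ccontr)
  assume "\<not> valP n f g m d \<le> valD n f g m d"
  then have "valD n f g m d < valP n f g m d" by simp
  then obtain z where z: "valD n f g m d < ereal z" "ereal z < valP n f g m d"
    using ereal_dense2 by blast
  show False
  proof (cases "\<exists>Z. D_feas n f g m d z Z")
    case True
    hence "ereal z \<le> valD n f g m d" unfolding valD_def by (intro Sup_upper) blast
    thus False using z by simp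
  next
    case False
    then obtain y where "P_feas n g m d y" "(\<Sum>a\<in>{a. f a \<noteq> 0}. f a * y a) \<le> z"
      using primal_le_of_dual_infeasible by blast
    hence "valP n f g m d \<le> ereal (\<Sum>a\<in>{a. f a \<noteq> 0}. f a * y a)"
      unfolding valP_def by (intro Inf_lower) blast
    also have "\<dots> \<le> ereal z" using \<open>(\<Sum>a\<in>{a. f a \<noteq> 0}. f a * y a) \<le> z\<close> by simp
    finally show False using z by simp
  qed
qed

end

theorem theorem1:
  fixes n m d :: nat and f :: rpoly and g :: "nat \<Rightarrow> rpoly" and R :: real
  assumes "is_poly n f"
    and "\<forall>i\<in>{1..m}. is_poly n (g i)"
    and "m \<ge> 1"
    and "g m = ball_poly n R"
    and "pdeg n f \<le> 2 * d"
    and "d \<ge> dmin n g m"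
  shows "valP n f g m d > -\<infinity> \<and> valP n f g m d = valD n f g m d"
proof -
  interpret lasserre_ball n m d f g R
    by unfold_locales (use assms in auto)
  have "valP n f g m d = valD n f g m d" using valD_le_valP valP_le_valD by (rule antisym[rotated])
  with valD_gt_minus_infinity show ?thesis by simp
qed

end
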